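(* Let $\{x,y\}$ be a Cartesian coordinate system in the Euclidean plane $\mathbb{E}^2$ and let $z := \frac{1}{2}(x - i y)$. Let $\xi$ be a non-trivial global conformal Killing vector field (GCKV) of $\mathbb{E}^2$, and let $\mu_0,\mu_1,\mu_2 \in \mathbb{C}$ be the complex constants such that \[ \xi = \left(\mu_0 + \mu_1 z + \tfrac{1}{2}\mu_2 z^2\right)\partial_z + \left(\overline{\mu_0} + \overline{\mu_1}\,\overline{z} + \tfrac{1}{2}\overline{\mu_2}\,\overline{z}^2\right)\partial_{\overline{z}}. \] For $\mathbb{A} = \begin{pmatrix} \alpha & \beta \\ \gamma & \delta \end{pmatrix} \in SL(2,\mathbb{C})$ (i.e. $\alpha\delta - \beta\gamma = 1$), let $\chi^{\mathbb{A}}$ be the Möbius transformation $z \mapsto \frac{\alpha z + \beta}{\gamma z + \delta}$ of the Riemann sphere $\mathbb{C}\cup\{\infty\}$. Then the push-forward $\chi^{\mathbb{A}}_{\star}(\xi)$ is written in canonical form with respect to $\{x,y\}$, i.e. takes the form $(\mu_0' + z^2)\partial_z + (\overline{\mu_0'} + \overline{z}^2)\partial_{\overline{z}}$ for some $\mu_0' \in \mathbb{C}$, if and only if \[ \mathbb{A} = \begin{pmatrix} \frac{1}{2}(\delta\mu_2 - \gamma\mu_1) & \frac{1}{2}\delta\mu_1 - \gamma\mu_0 \\ \gamma & \delta \end{pmatrix}, \qquad \frac{1}{2}\delta^2\mu_2 - \gamma\delta\mu_1 + \gamma^2\mu_0 = 1. \] Moreover, for any such $\mathbb{A}$, \[ \chi^{\mathbb{A}}_{\star}(\xi)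 = \left(\tfrac{1}{4}\left(\sigma_{\{\mu\}} - i\tau_{\{\mu\}}\right) + z^2\right)\partial_z + \left(\tfrac{1}{4}\left(\sigma_{\{\mu\}} + i\tau_{\{\mu\}}\right) + \overline{z}^2\right)\partial_{\overline{z}}, \] where the real numbers $\sigma_{\{\mu\}}, \tau_{\{\mu\}}$ are defined by $\sigma_{\{\mu\}} - i\tau_{\{\mu\}} := 2\mu_0\mu_2 - \mu_1^2$.
   Context: A conformal Killing vector of $\mathbb{E}^2$ is called global (GCKV) if it extends smoothly to the one-point compactification (Riemann sphere) $\mathbb{S}^2$; in the complex coordinate $z = \frac{1}{2}(x-iy)$ these are exactly the vector fields of the form $(\mu_0 + \mu_1 z + \frac{1}{2}\mu_2 z^2)\partial_z + \text{c.c.}$ with $\mu_0,\mu_1,\mu_2\in\mathbb{C}$. Such a field is called canonical with respect to $\{x,y\}$ when $\mu_1 = 0$ and $\mu_2 = 2$. Under a Möbius transformation $\chi^{\mathbb{A}}$, $\mathbb{A} = \begin{pmatrix}\alpha&\beta\\\gamma&\delta\end{pmatrix}$, $\alpha\delta-\beta\gamma=1$, the parameters of $\chi^{\mathbb{A}}_{\star}(\xi)$ are $\mu_0' = \alpha^2\mu_0 - \alpha\beta\mu_1 + \frac{1}{2}\beta^2\mu_2$, $\mu_1' = -2\alpha\gamma\mu_0 + (\alpha\delta+\beta\gamma)\mu_1 - \beta\delta\mu_2$, $\mu_2' = 2\gamma^2\mu_0 - 2\gamma\delta\mu_1 + \delta^2\mu_2$, and the quantity $2\mu_0\mu_2 -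 \mu_1^2$ is invariant under this transformation. *)

theory Defs
  imports Complex_Main
begin

text \<open>A global conformal Killing vector (GCKV) of the Euclidean plane is
  represented by its parameter triple (mu0, mu1, mu2), corresponding to the
  field (mu0 + mu1 z + mu2 z^2/2) d/dz + c.c. with z = (x - i y)/2.
  It is non-trivial iff the triple is non-zero.\<close>

type_synonym gckv = "complex \<times> complex \<times> complex"

definition gckv_coeff :: "gckv \<Rightarrow> complex \<Rightarrow> complex" where
  "gckv_coeff m z = (case m of (m0, m1, m2) \<Rightarrow> m0 + m1 * z + m2 * z^2 / 2)"

definition nontrivial_gckv :: "gckv \<Rightarrow> bool" where
  "nontrivial_gckv m \<longleftrightarrow> m \<noteq> (0, 0, 0)"

definition canonical_gckv :: "gckv \<Rightarrow> bool" where
  "canonical_gckv m \<longleftrightarrow> fst (snd m) = 0 \<and> snd (snd m) = 2"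

definition moebius :: "complex \<Rightarrow> complex \<Rightarrow> complex \<Rightarrow> complex \<Rightarrow> complex \<Rightarrow> complex" where
  "moebius \<alpha> \<beta> \<gamma> \<delta> z = (\<alpha> * z + \<beta>) / (\<gamma> * z + \<delta>)"

definition pushforward :: "complex \<Rightarrow> complex \<Rightarrow> complex \<Rightarrow> complex \<Rightarrow> gckv \<Rightarrow> gckv" where
  "pushforward \<alpha> \<beta> \<gamma> \<delta> m = (case m of (m0, m1, m2) \<Rightarrow>
     (\<alpha>^2 * m0 - \<alpha> * \<beta> * m1 + \<beta>^2 * m2 / 2,
      - 2 * \<alpha> * \<gamma> * m0 + (\<alpha> * \<delta> + \<beta> * \<gamma>) * m1 - \<beta> * \<delta> * m2,
      2 * \<gamma>^2 * m0 - 2 * \<gamma> * \<delta> * m1 + \<delta>^2 * m2))"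

definition sigma_mu :: "gckv \<Rightarrow> real" where
  "sigma_mu m = (case m of (m0, m1, m2) \<Rightarrow> Re (2 * m0 * m2 - m1^2))"

definition tau_mu :: "gckv \<Rightarrow> real" where
  "tau_mu m = (case m of (m0, m1, m2) \<Rightarrow> - Im (2 * m0 * m2 - m1^2))"

end

theory Submission
  imports Defs
begin

text \<open>Both transformed parameters \<mu>1' and \<mu>2' are values of one linear form, determined by the
  second row (\<gamma>, \<delta>) of the matrix, on its two rows (\<mu>2' up to sign). Since the rows form a basis
  of determinant 1, the canonical conditions \<mu>1' = 0, \<mu>2' = 2 pin the first row down as the
  halved coefficient vector (a, b) of that form rotated by a right angle, (-b/2, a/2). The value of \<mu>0' then follows from
  the invariance of 2 \<mu>0 \<mu>2 - \<mu>1^2.\<close>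

definition gckv_discriminant :: "gckv \<Rightarrow> complex" where
  "gckv_discriminant m = (case m of (m0, m1, m2) \<Rightarrow> 2 * m0 * m2 - m1^2)"

lemma gckv_discriminant_pushforward:
  "gckv_discriminant (pushforward \<alpha> \<beta> \<gamma> \<delta> m) = (\<alpha> * \<delta> - \<beta> * \<gamma>)^2 * gckv_discriminant m"
  by (cases m) (simp add: gckv_discriminant_def pushforward_def field_simps power2_eq_square)

lemma sigma_tau_eq_gckv_discriminant:
  "complex_of_real (sigma_mu m) - \<i> * complex_of_real (tau_mu m) = gckv_discriminant m"
  by (cases m) (simp add: sigma_mu_def tau_mu_def gckv_discriminant_def complex_eq_iff)

lemma gckv_coeff_canonical:
  assumes "canonical_gckv m"
  shows "gckv_coeff m z = gckv_discriminant m / 4 + z^2"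
  using assms by (cases m) (simp add: canonical_gckv_def gckv_coeff_def gckv_discriminant_def)

lemma pushforward_eq_linear_form:
  "pushforward \<alpha> \<beta> \<gamma> \<delta> (m0, m1, m2) =
     (\<alpha>^2 * m0 - \<alpha> * \<beta> * m1 + \<beta>^2 * m2 / 2,
      (\<delta> * m1 - 2 * \<gamma> * m0) * \<alpha> + (\<gamma> * m1 - \<delta> * m2) * \<beta>,
      - ((\<delta> * m1 - 2 * \<gamma> * m0) * \<gamma> + (\<gamma> * m1 - \<delta> * m2) * \<delta>))"
  by (simp add: pushforward_def algebra_simps power2_eq_square)

lemma unimodular_linear_form_coeffs:
  fixes a b c \<alpha> \<beta> \<gamma> \<delta> :: "'a::comm_ring_1"
  assumes det: "\<alpha> * \<delta> - \<beta> * \<gamma> = 1"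
    and first: "a * \<alpha> + b * \<beta> = 0" and second: "a * \<gamma> + b * \<delta> = c"
  shows "b = c * \<alpha>" and "a = - (c * \<beta>)"
proof -
  have "b = b * (\<alpha> * \<delta> - \<beta> * \<gamma>)" using det by simp
  also have "\<dots> = \<alpha> * (a * \<gamma> + b * \<delta>) - \<gamma> * (a * \<alpha> + b * \<beta>)" by (simp add: algebra_simps)
  finally show "b = c * \<alpha>" using first second by (simp add: mult.commute)
  have "a = a * (\<alpha> * \<delta> - \<beta> * \<gamma>)" using det by simp
  also have "\<dots> = \<delta> * (a * \<alpha> + b * \<beta>) - \<beta> * (a * \<gamma> + b * \<delta>)" by (simp add: algebra_simps)
  finally show "a = - (c * \<beta>)" using first second by (simp add: mult.commute)
qed

lemma canonical_pushforward_iff: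
  fixes \<mu>0 \<mu>1 \<mu>2 \<alpha> \<beta> \<gamma> \<delta> :: complex
  assumes det: "\<alpha> * \<delta> - \<beta> * \<gamma> = 1"
  shows "canonical_gckv (pushforward \<alpha> \<beta> \<gamma> \<delta> (\<mu>0, \<mu>1, \<mu>2)) \<longleftrightarrow>
           \<alpha> = (\<delta> * \<mu>2 - \<gamma> * \<mu>1) / 2 \<and> \<beta> = \<delta> * \<mu>1 / 2 - \<gamma> * \<mu>0 \<and>
           \<delta>^2 * \<mu>2 / 2 - \<gamma> * \<delta> * \<mu>1 + \<gamma>^2 * \<mu>0 = 1"
proof -
  define a where "a = \<delta> * \<mu>1 - 2 * \<gamma> * \<mu>0"
  define b where "b = \<gamma> * \<mu>1 - \<delta> * \<mu>2"
  have normalisation: "a * \<gamma> + b * \<delta> = -2 \<longleftrightarrow> \<delta>^2 * \<mu>2 / 2 - \<gamma> * \<delta> * \<mu>1 + \<gamma>^2 * \<mu>0 = 1"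
    unfolding a_def b_def by (auto simp: field_simps power2_eq_square)
  have first_row: "\<alpha> = (\<delta> * \<mu>2 - \<gamma> * \<mu>1) / 2 \<and> \<beta> = \<delta> * \<mu>1 / 2 - \<gamma> * \<mu>0 \<longleftrightarrow>
                   \<alpha> = - b / 2 \<and> \<beta> = a / 2"
    unfolding a_def b_def by (auto simp: field_simps)
  have "canonical_gckv (pushforward \<alpha> \<beta> \<gamma> \<delta> (\<mu>0, \<mu>1, \<mu>2)) \<longleftrightarrow>
        a * \<alpha> + b * \<beta> = 0 \<and> a * \<gamma> + b * \<delta> = -2"
    unfolding canonical_gckv_def pushforward_eq_linear_form a_def b_def
    by (simp only: prod.sel minus_equation_iff eq_commute[of "- 2"])
  also have "\<dots> \<longleftrightarrow> (\<alpha> = - b / 2 \<and> \<beta> = a / 2) \<and> a * \<gamma> + b * \<delta> = -2"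
  proof
    assume canonical: "a * \<alpha> + b * \<beta> = 0 \<and> a * \<gamma> + b * \<delta> = -2"
    then have "b = -2 * \<alpha>" "a = - (-2 * \<beta>)"
      using unimodular_linear_form_coeffs[OF det] by blast+
    with canonical show "(\<alpha> = - b / 2 \<and> \<beta> = a / 2) \<and> a * \<gamma> + b * \<delta> = -2" by simp
  qed (auto simp: algebra_simps)
  finally show ?thesis using normalisation first_row by blast
qed

theorem proposition7p2:
  fixes \<mu>0 \<mu>1 \<mu>2 \<alpha> \<beta> \<gamma> \<delta> :: complex
  assumes "nontrivial_gckv (\<mu>0, \<mu>1, \<mu>2)"
    and "\<alpha> * \<delta> - \<beta> * \<gamma> = 1"
  shows "(canonical_gckv (pushforward \<alpha> \<beta> \<gamma> \<delta> (\<mu>0, \<mu>1, \<mu>2)) \<longleftrightarrow>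
           (\<alpha> = (\<delta> * \<mu>2 - \<gamma> * \<mu>1) / 2 \<and> \<beta> = \<delta> * \<mu>1 / 2 - \<gamma> * \<mu>0 \<and>
            \<delta>^2 * \<mu>2 / 2 - \<gamma> * \<delta> * \<mu>1 + \<gamma>^2 * \<mu>0 = 1))
       \<and> (canonical_gckv (pushforward \<alpha> \<beta> \<gamma> \<delta> (\<mu>0, \<mu>1, \<mu>2)) \<longrightarrow>
           (\<forall>z. gckv_coeff (pushforward \<alpha> \<beta> \<gamma> \<delta> (\<mu>0, \<mu>1, \<mu>2)) z =
              (complex_of_real (sigma_mu (\<mu>0, \<mu>1, \<mu>2))
                 - \<i> * complex_of_real (tau_mu (\<mu>0, \<mu>1, \<mu>2))) / 4 + z^2))"
proof -
  let ?m' = "pushforward \<alpha> \<beta> \<gamma> \<delta> (\<mu>0, \<mu>1, \<mu>2)"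
  have "gckv_discriminant ?m' = gckv_discriminant (\<mu>0, \<mu>1, \<mu>2)"
    using gckv_discriminant_pushforward assms(2) by simp
  then have "gckv_coeff ?m' z =
      (complex_of_real (sigma_mu (\<mu>0, \<mu>1, \<mu>2)) - \<i> * complex_of_real (tau_mu (\<mu>0, \<mu>1, \<mu>2))) / 4 + z^2"
    if "canonical_gckv ?m'" for z
    using gckv_coeff_canonical[OF that] sigma_tau_eq_gckv_discriminant by simp
  with canonical_pushforward_iff[OF assms(2)] show ?thesis by blast
qed

end
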